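(* Let $f:X_1\to\mathrm{SP}(Y_1)$ and $g:X_2\to\mathrm{SP}(Y_2)$ be based multivalued functions. Then for all $a\in\widetilde{H}^*(Y_1)$, $b\in\widetilde{H}^*(Y_2)$, $$(f\triangle g)^*(a\times b)=f^*(a)\times g^*(b)\in\widetilde{H}^*(X_1\wedge X_2),$$ i.e. the square formed by $f^*\otimes g^*$, $(f\triangle g)^*$ and the two cross products $\widetilde{H}^*(Y_1)\otimes\widetilde{H}^*(Y_2)\to\widetilde{H}^*(Y_1\wedge Y_2)$, $\widetilde{H}^*(X_1)\otimes\widetilde{H}^*(X_2)\to\widetilde{H}^*(X_1\wedge X_2)$ commutes.
   Context: For a based space $(X,e)$, $\mathrm{SP}(X)$ is the free unital abelian monoid on $X$ with identity $e$ (quotient of $\bigsqcup_{n\ge1}X^n/\mathfrak{S}_n$ by $(x_1,\dots,x_n,e)\sim(x_1,\dots,x_n)$), based at $e$, with inclusion $\iota_X:X\to\mathrm{SP}(X)$. A based multivalued function $A\to B$ is a based map $A\to\mathrm{SP}(B)$. Identify $\widetilde{H}^n(Y)=[Y,\mathrm{SP}(S^n)]_*$. For $\alpha:Y\to\mathrm{SP}(S^n)$ let $\widetilde{\alpha}:\mathrm{SP}(Y)\to\mathrm{SP}(S^n)$ be the unique continuous monoid homomorphism with $\widetilde\alpha\circ\iota_Y=\alpha$; for a based map $f:X\to\mathrm{SP}(Y)$ define $f^*[\alpha]=[\widetilde\alpha\circ f]$. Let $\iota_{X,Y}:\mathrm{SP}(X)\wedge\mathrm{SP}(Y)\to\mathrm{SP}(X\wedge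 Y)$ be the map $(\sum_i x_i,\sum_j y_j)\mapsto\sum_{i,j}(x_i,y_j)$, and $f\triangle g:=\iota_{Y_1,Y_2}\circ(f\wedge g):X_1\wedge X_2\to\mathrm{SP}(Y_1\wedge Y_2)$. The cross product is given by $[\alpha]\times[\beta]=[\iota_{S^m,S^n}\circ(\alpha\wedge\beta)]$ for $\alpha:X\to\mathrm{SP}(S^m)$, $\beta:Y\to\mathrm{SP}(S^n)$, where $\iota_{S^m,S^n}:\mathrm{SP}(S^m)\wedge\mathrm{SP}(S^n)\to\mathrm{SP}(S^{m+n})$. *)

theory Defs
  imports "HOL-Analysis.Analysis" "HOL-Library.Multiset"
begin

definition quot_top :: "'a topology \<Rightarrow> ('a \<Rightarrow> 'b) \<Rightarrow> 'b topology" where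
  "quot_top X q = topology (\<lambda>U. U \<subseteq> q ` topspace X \<and> openin X {x \<in> topspace X. q x \<in> U})"

lemma istopology_quot_top:
  "istopology (\<lambda>U. U \<subseteq> q ` topspace X \<and> openin X {x \<in> topspace X. q x \<in> U})"
proof -
  have 1: "openin X {x \<in> topspace X. q x \<in> S \<inter> T}"
    if "openin X {x \<in> topspace X. q x \<in> S}" "openin X {x \<in> topspace X. q x \<in> T}" for S T
  proof -
    have "{x \<in> topspace X. q x \<in> S \<inter> T} =
          {x \<in> topspace X. q x \<in> S} \<inter> {x \<in> topspace X. q x \<in> T}" by auto
    then show ?thesis using that by auto
  qed
  have 2: "openin X {x \<in> topspace X. q x \<in> \<Union>K}"
    if "\<forall>U\<in>K. openin X {x \<in> topspace X. q x \<in> U}" for K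
  proof -
    have "{x \<in> topspace X. q x \<in> \<Union>K} = (\<Union>U\<in>K. {x \<in> topspace X. q x \<in> U})" by auto
    then show ?thesis using that by auto
  qed
  show ?thesis unfolding istopology_def using 1 2 by blast
qed

text \<open>The smash product of based spaces (X,e1) and (Y,e2) is modelled on pairs:
  every point of the wedge is sent to the basepoint (e1,e2), and the topology is the
  quotient topology of the product topology.\<close>

definition smash_rep :: "'a \<Rightarrow> 'b \<Rightarrow> 'a \<times> 'b \<Rightarrow> 'a \<times> 'b" where
  "smash_rep e1 e2 p = (if fst p = e1 \<or> snd p = e2 then (e1, e2) else p)"

definition smash :: "'a topology \<Rightarrow> 'a \<Rightarrow> 'b topology \<Rightarrow> 'b \<Rightarrow> ('a \<times> 'b) topology" where
  "smash X e1 Y e2 = quot_top (prod_topology X Y) (smash_rep e1 e2)"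

definition smash_map :: "'c \<Rightarrow> 'd \<Rightarrow> ('a \<Rightarrow> 'c) \<Rightarrow> ('b \<Rightarrow> 'd) \<Rightarrow> 'a \<times> 'b \<Rightarrow> 'c \<times> 'd" where
  "smash_map d1 d2 f g p = smash_rep d1 d2 (f (fst p), g (snd p))"

text \<open>A point of SP(X) is a finite multiset of points of X not containing the basepoint e
  (the relation (x_1,...,x_n,e) ~ (x_1,...,x_n) removes basepoints); the basepoint of SP(X)
  is the empty multiset.\<close>

definition SP_rep :: "'a \<Rightarrow> nat \<times> (nat \<Rightarrow> 'a) \<Rightarrow> 'a multiset" where
  "SP_rep e p = filter_mset (\<lambda>y. y \<noteq> e) (image_mset (snd p) (mset_set {..<fst p}))"

definition SP :: "'a topology \<Rightarrow> 'a \<Rightarrow> 'a multiset topology" where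
  "SP X e = quot_top (sum_topology (\<lambda>n. product_topology (\<lambda>i. X) {..<n}) {1..}) (SP_rep e)"

definition sp_unit :: "'a \<Rightarrow> 'a \<Rightarrow> 'a multiset" where
  "sp_unit e x = filter_mset (\<lambda>y. y \<noteq> e) {#x#}"

text \<open>The unique continuous monoid homomorphism SP(Y) -> SP(S^n) extending alpha
  (sum of the values on the points of the multiset).\<close>
definition sp_ext :: "('b \<Rightarrow> 'c multiset) \<Rightarrow> 'b multiset \<Rightarrow> 'c multiset" where
  "sp_ext \<alpha> M = sum_mset (image_mset \<alpha> M)"

definition sp_cross :: "'a multiset \<times> 'b multiset \<Rightarrow> ('a \<times> 'b) multiset" where
  "sp_cross p = sum_mset (image_mset (\<lambda>x. image_mset (\<lambda>y. (x, y)) (snd p)) (fst p))"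

definition mv_tri :: "('a \<Rightarrow> 'b multiset) \<Rightarrow> ('c \<Rightarrow> 'd multiset) \<Rightarrow> 'a \<times> 'c \<Rightarrow> ('b \<times> 'd) multiset" where
  "mv_tri f g = sp_cross \<circ> smash_map {#} {#} f g"

definition sbase :: "nat \<Rightarrow> real" where
  "sbase = (\<lambda>i. if i = 0 then 1 else 0)"

definition hclass :: "'a topology \<Rightarrow> 'a \<Rightarrow> 'b topology \<Rightarrow> 'b \<Rightarrow> ('a \<Rightarrow> 'b) \<Rightarrow> ('a \<Rightarrow> 'b) set" where
  "hclass X e Y e' f = {h. homotopic_with (\<lambda>k. k e = e') X Y f h}"

text \<open>Representative of the cross product [alpha] x [beta]: iota_{S^m,S^n} o (alpha smash beta),
  where iota_{S^m,S^n} : SP(S^m) smash SP(S^n) -> SP(S^{m+n}) is iota_{S^m,S^n} followed by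
  SP(phi) for the chosen based identification phi : S^m smash S^n -> S^{m+n}.\<close>
definition cross_rep ::
  "((nat \<Rightarrow> real) \<times> (nat \<Rightarrow> real) \<Rightarrow> (nat \<Rightarrow> real)) \<Rightarrow>
   ('a \<Rightarrow> (nat \<Rightarrow> real) multiset) \<Rightarrow> ('b \<Rightarrow> (nat \<Rightarrow> real) multiset) \<Rightarrow>
   'a \<times> 'b \<Rightarrow> (nat \<Rightarrow> real) multiset" where
  "cross_rep \<phi> \<alpha> \<beta> = (\<lambda>p. image_mset \<phi> (sp_cross (smash_map {#} {#} \<alpha> \<beta> p)))"

end

theory Submission
  imports Defs
begin

(* Both sides are represented by the same map, not merely by homotopic ones: at a point
   (x, y) each is the double sum, over the points a of f x and b of g y, of the image under
   phi of the pairing of alpha a with beta b. This is the bilinearity of the pairing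
   SP(X) x SP(Y) -> SP(X x Y) together with the additivity of the extensions of alpha
   and beta to SP(Y1) and SP(Y2). *)

lemma sp_cross_smash_rep [simp]: "sp_cross (smash_rep {#} {#} p) = sp_cross p"
  by (cases p) (auto simp: smash_rep_def sp_cross_def)

lemma mv_tri_apply: "mv_tri f g (x, y) = sp_cross (f x, g y)"
  by (simp add: mv_tri_def smash_map_def)

lemma cross_rep_apply: "cross_rep \<phi> \<alpha> \<beta> (x, y) = image_mset \<phi> (sp_cross (\<alpha> x, \<beta> y))"
  by (simp add: cross_rep_def smash_map_def)

lemma sp_cross_empty_left [simp]: "sp_cross ({#}, B) = {#}"
  and sp_cross_add_left [simp]: "sp_cross (A + A', B) = sp_cross (A, B) + sp_cross (A', B)"
  by (simp_all add: sp_cross_def)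

lemma sp_cross_empty_right [simp]: "sp_cross (A, {#}) = {#}"
  and sp_cross_add_right [simp]: "sp_cross (A, B + B') = sp_cross (A, B) + sp_cross (A, B')"
  by (induction A) (simp_all add: sp_cross_def)

lemma sp_cross_sum_mset_left: "sp_cross (\<Sum>x\<in>#M. F x, B) = (\<Sum>x\<in>#M. sp_cross (F x, B))"
  by (induction M) simp_all

lemma sp_cross_sum_mset_right: "sp_cross (A, \<Sum>y\<in>#N. G y) = (\<Sum>y\<in>#N. sp_cross (A, G y))"
  by (induction N) simp_all

lemma sp_ext_sum_mset: "sp_ext F (\<Sum>x\<in>#M. G x) = (\<Sum>x\<in>#M. sp_ext F (G x))"
  by (induction M) (simp_all add: sp_ext_def)

lemma image_mset_sum_mset: "image_mset h (\<Sum>x\<in>#M. G x) = (\<Sum>x\<in>#M. image_mset h (G x))"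
  by (induction M) simp_all

lemma sp_ext_sp_cross: "sp_ext F (sp_cross (A, B)) = (\<Sum>x\<in>#A. \<Sum>y\<in>#B. F (x, y))"
  by (simp add: sp_cross_def sp_ext_sum_mset) (simp add: sp_ext_def multiset.map_comp comp_def)

lemma sp_cross_sp_ext:
  "sp_cross (sp_ext \<alpha> A, sp_ext \<beta> B) = (\<Sum>x\<in>#A. \<Sum>y\<in>#B. sp_cross (\<alpha> x, \<beta> y))"
  unfolding sp_ext_def by (subst sp_cross_sum_mset_left) (simp add: sp_cross_sum_mset_right)

lemma sp_ext_cross_rep_comp_mv_tri:
  "sp_ext (cross_rep \<phi> \<alpha> \<beta>) \<circ> mv_tri f g = cross_rep \<phi> (sp_ext \<alpha> \<circ> f) (sp_ext \<beta> \<circ> g)"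
proof
  fix p :: "'a \<times> 'b"
  obtain x y where p: "p = (x, y)"
    by (cases p)
  have "(sp_ext (cross_rep \<phi> \<alpha> \<beta>) \<circ> mv_tri f g) p
      = (\<Sum>a\<in>#f x. \<Sum>b\<in>#g y. image_mset \<phi> (sp_cross (\<alpha> a, \<beta> b)))"
    by (simp add: p mv_tri_apply sp_ext_sp_cross cross_rep_apply)
  also have "\<dots> = image_mset \<phi> (sp_cross (sp_ext \<alpha> (f x), sp_ext \<beta> (g y)))"
    by (simp add: sp_cross_sp_ext image_mset_sum_mset)
  also have "\<dots> = cross_rep \<phi> (sp_ext \<alpha> \<circ> f) (sp_ext \<beta> \<circ> g) p"
    by (simp add: p cross_rep_apply)
  finally show "(sp_ext (cross_rep \<phi> \<alpha> \<beta>) \<circ> mv_tri f g) p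
      = cross_rep \<phi> (sp_ext \<alpha> \<circ> f) (sp_ext \<beta> \<circ> g) p" .
qed

theorem proposition1p3:
  fixes X1 :: "'a topology" and e1 :: 'a and X2 :: "'c topology" and e2 :: 'c
    and Y1 :: "'b topology" and d1 :: 'b and Y2 :: "'d topology" and d2 :: 'd
    and f :: "'a \<Rightarrow> 'b multiset" and g :: "'c \<Rightarrow> 'd multiset"
    and \<alpha> :: "'b \<Rightarrow> (nat \<Rightarrow> real) multiset" and \<beta> :: "'d \<Rightarrow> (nat \<Rightarrow> real) multiset"
    and \<phi> :: "(nat \<Rightarrow> real) \<times> (nat \<Rightarrow> real) \<Rightarrow> (nat \<Rightarrow> real)"
    and m n :: nat
  assumes "e1 \<in> topspace X1" and "e2 \<in> topspace X2"
    and "d1 \<in> topspace Y1" and "d2 \<in> topspace Y2"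
    and "continuous_map X1 (SP Y1 d1) f" and "f e1 = {#}"
    and "continuous_map X2 (SP Y2 d2) g" and "g e2 = {#}"
    and "continuous_map Y1 (SP (nsphere m) sbase) \<alpha>" and "\<alpha> d1 = {#}"
    and "continuous_map Y2 (SP (nsphere n) sbase) \<beta>" and "\<beta> d2 = {#}"
    and "homeomorphic_map (smash (nsphere m) sbase (nsphere n) sbase) (nsphere (m + n)) \<phi>"
    and "\<phi> (sbase, sbase) = sbase"
  shows "hclass (smash X1 e1 X2 e2) (e1, e2) (SP (nsphere (m + n)) sbase) {#}
           (sp_ext (cross_rep \<phi> \<alpha> \<beta>) \<circ> mv_tri f g)
       = hclass (smash X1 e1 X2 e2) (e1, e2) (SP (nsphere (m + n)) sbase) {#}
           (cross_rep \<phi> (sp_ext \<alpha> \<circ> f) (sp_ext \<beta> \<circ> g))"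
  by (simp only: sp_ext_cross_rep_comp_mv_tri)

end
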